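(* Let $A=\{v_1,v_2,\dots,v_n\}$ be a set of $n\geq 1$ distinct integers, and let $Y_1,Y_2,Y_3$ be independent random variables, each uniformly distributed on $A$. Set $Y=Y_1+Y_2+Y_3$. Then $$\max_{x\in \mathbb{Z}} \mathbb{P}[Y=x]\leq\frac{3+1/n^2}{4n}.$$ *)

theory Defs
  imports "HOL-Probability.Probability"
begin

end

theory Submission imports Defs begin

text \<open>
  Conditioning on the third summand, \<open>\<P>[Y = x] = N / n\<^sup>3\<close>, where \<open>N\<close> counts the pairs
  \<open>(a, b) \<in> A\<^sup>2\<close> with \<open>a + b \<in> x - A\<close>. Enumerate \<open>A\<close> increasingly as \<open>e\<^sub>0 < \<dots> < e\<^sub>n\<^sub>-\<^sub>1\<close>.
  Among index pairs with a fixed value of \<open>e\<^sub>i + e\<^sub>j\<close>, \<open>i\<close> increases exactly when \<open>j\<close> decreases,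
  so \<open>(i, j)\<close> is determined by \<open>e\<^sub>i + e\<^sub>j\<close> and \<open>min i (n - 1 - j)\<close>. Hence at most \<open>n h\<close> pairs
  have \<open>min i (n - 1 - j) < h\<close>, and all others lie in the \<open>(n - h) \<times> (n - h)\<close> block
  \<open>i \<ge> h, j < n - h\<close>. The choice \<open>h = \<lceil>n/2\<rceil>\<close> gives \<open>4 N \<le> 3 n\<^sup>2 + 1\<close>.
\<close>

lemma pair_pmf_of_set:
  assumes "finite A" "A \<noteq> {}" "finite B" "B \<noteq> {}"
  shows "pair_pmf (pmf_of_set A) (pmf_of_set B) = pmf_of_set (A \<times> B)"
proof (rule pmf_eqI)
  fix ab :: "'a \<times> 'b"
  show "pmf (pair_pmf (pmf_of_set A) (pmf_of_set B)) ab = pmf (pmf_of_set (A \<times> B)) ab"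
    using assms by (cases ab) (simp add: pmf_pair card_cartesian_product split: split_indicator)
qed

lemma sum_min_index_inj:
  fixes e :: "nat \<Rightarrow> 'a::linordered_cancel_ab_semigroup_add"
  assumes mono: "strict_mono_on {..<n} e"
  shows "inj_on (\<lambda>(i, j). (e i + e j, min i (n - 1 - j))) ({..<n} \<times> {..<n})"
proof -
  have min_less: "min i (n - 1 - j) < min i' (n - 1 - j')"
    if "i < i'" "i' < n" "j < n" "j' < n" "e i + e j = e i' + e j'" for i j i' j'
  proof -
    have "e i < e i'" using that by (intro strict_mono_onD[OF mono]) auto
    then have "e j' < e j"
      using that(5) add_less_le_mono[of "e i" "e i'" "e j" "e j'"] by (metis not_less less_irrefl)
    then have "j' < j" using that strict_mono_on_less[OF mono] by auto
    then show ?thesis using that by linarith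
  qed
  show ?thesis
  proof (rule inj_onI)
    fix p q
    assume "p \<in> {..<n} \<times> {..<n}" "q \<in> {..<n} \<times> {..<n}"
      and eq: "(\<lambda>(i, j). (e i + e j, min i (n - 1 - j))) p
             = (\<lambda>(i, j). (e i + e j, min i (n - 1 - j))) q"
    then obtain i j i' j' where p: "p = (i, j)" and q: "q = (i', j')"
      and ij: "i < n" "j < n" "i' < n" "j' < n" by auto
    have sums: "e i + e j = e i' + e j'" and mins: "min i (n - 1 - j) = min i' (n - 1 - j')"
      using eq unfolding p q by simp_all
    have "i = i'"
      using min_less[of i i' j j'] min_less[of i' i j' j] ij sums mins
      by (cases i i' rule: linorder_cases) auto
    moreover from this have "j = j'"
      using sums ij strict_mono_on_eqD[OF mono] by auto
    ultimately show "p = q" unfolding p q by simp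
  qed
qed

lemma card_index_pairs_sum_in_le:
  fixes e :: "nat \<Rightarrow> 'a::linordered_cancel_ab_semigroup_add"
  assumes mono: "strict_mono_on {..<n} e" and "finite C"
  shows "card {(i, j) \<in> {..<n} \<times> {..<n}. e i + e j \<in> C} \<le> card C * h + (n - h) * (n - h)"
proof -
  let ?P = "{(i, j) \<in> {..<n} \<times> {..<n}. e i + e j \<in> C}"
  let ?near = "{(i, j) \<in> ?P. min i (n - 1 - j) < h}"
  let ?corner = "{h..<n} \<times> {..<n - h}"
  have "card ?near \<le> card (C \<times> {..<h})"
  proof (rule card_inj_on_le)
    show "inj_on (\<lambda>(i, j). (e i + e j, min i (n - 1 - j))) ?near"
      by (rule inj_on_subset[OF sum_min_index_inj[OF mono]]) auto
  qed (use \<open>finite C\<close> in auto)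
  moreover have "card ?P \<le> card (?near \<union> ?corner)"
    by (rule card_mono) (auto intro: finite_subset[of _ "{..<n} \<times> {..<n}"])
  moreover have "card (?near \<union> ?corner) \<le> card ?near + card ?corner"
    by (rule card_Un_le)
  ultimately show ?thesis
    by (simp add: card_cartesian_product)
qed

lemma ex_bij_betw_strict_mono_card_linorder:
  fixes A :: "'a::linorder set"
  assumes "finite A"
  obtains e where "bij_betw e {..<card A} A" and "strict_mono_on {..<card A} e"
proof
  let ?xs = "sorted_list_of_set A"
  show "bij_betw ((!) ?xs) {..<card A} A"
    using assms by (intro bij_betw_nth) simp_all
  show "strict_mono_on {..<card A} ((!) ?xs)"
    using assms by (intro strict_mono_onI sorted_wrt_nth_less[OF strict_sorted_list_of_set]) auto
qed

lemma card_pairs_sum_in_le: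
  fixes A C :: "'a::linordered_cancel_ab_semigroup_add set"
  assumes "finite A" "finite C"
  shows "card {(a, b) \<in> A \<times> A. a + b \<in> C} \<le> card C * h + (card A - h) * (card A - h)"
proof -
  obtain e where bij: "bij_betw e {..<card A} A" and mono: "strict_mono_on {..<card A} e"
    using ex_bij_betw_strict_mono_card_linorder[OF assms(1)] .
  let ?I = "{..<card A} \<times> {..<card A}"
  have surj: "e ` {..<card A} = A"
    using bij by (rule bij_betw_imp_surj_on)
  have "{(a, b) \<in> A \<times> A. a + b \<in> C} = map_prod e e ` {(i, j) \<in> ?I. e i + e j \<in> C}"
  proof
    show "{(a, b) \<in> A \<times> A. a + b \<in> C} \<subseteq> map_prod e e ` {(i, j) \<in> ?I. e i + e j \<in> C}"
    proof clarify
      fix a b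
      assume "a \<in> A" "b \<in> A" "a + b \<in> C"
      moreover obtain i j where "i < card A" "j < card A" "a = e i" "b = e j"
        using surj \<open>a \<in> A\<close> \<open>b \<in> A\<close> by (metis imageE lessThan_iff)
      ultimately show "(a, b) \<in> map_prod e e ` {(i, j) \<in> ?I. e i + e j \<in> C}"
        by (intro image_eqI[of _ _ "(i, j)"]) simp_all
    qed
  qed (use surj in auto)
  also have "card \<dots> = card {(i, j) \<in> ?I. e i + e j \<in> C}"
  proof (rule card_image)
    have "inj_on e {..<card A}"
      using bij by (rule bij_betw_imp_inj_on)
    then have "inj_on (map_prod e e) ?I"
      by (intro map_prod_inj_on)
    then show "inj_on (map_prod e e) {(i, j) \<in> ?I. e i + e j \<in> C}"
      by (rule inj_on_subset) blast
  qed
  finally show ?thesis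
    using card_index_pairs_sum_in_le[OF mono assms(2)] by simp
qed

lemma pmf_map_pmf_of_set:
  assumes "finite S" "S \<noteq> {}"
  shows "pmf (map_pmf f (pmf_of_set S)) x = card {s \<in> S. f s = x} / card S"
  using assms by (simp add: pmf_map measure_pmf_of_set vimage_def Int_def)

lemma pmf_sum3_pmf_of_set:
  fixes A :: "'a::ab_group_add set"
  assumes "finite A" "A \<noteq> {}"
  shows "pmf (map_pmf (\<lambda>((y1, y2), y3). y1 + y2 + y3)
           (pair_pmf (pair_pmf (pmf_of_set A) (pmf_of_set A)) (pmf_of_set A))) x
         = card {(a, b) \<in> A \<times> A. a + b \<in> (\<lambda>c. x - c) ` A} / card A ^ 3"
proof -
  let ?T = "{t \<in> (A \<times> A) \<times> A. (\<lambda>((y1, y2), y3). y1 + y2 + y3) t = x}"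
  have "bij_betw fst ?T {(a, b) \<in> A \<times> A. a + b \<in> (\<lambda>c. x - c) ` A}"
    by (rule bij_betwI[where g = "\<lambda>(a, b). ((a, b), x - a - b)"])
       (auto simp: algebra_simps)
  then have "card ?T = card {(a, b) \<in> A \<times> A. a + b \<in> (\<lambda>c. x - c) ` A}"
    by (rule bij_betw_same_card)
  moreover have "card ((A \<times> A) \<times> A) = card A ^ 3"
    by (simp add: card_cartesian_product power3_eq_cube)
  ultimately show ?thesis
    using assms by (simp add: pair_pmf_of_set pmf_map_pmf_of_set)
qed

lemma four_mul_balanced_split_le:
  fixes n :: nat
  defines "h \<equiv> (n + 1) div 2"
  shows "4 * (n * h + (n - h) * (n - h)) \<le> 3 * n * n + 1"
proof (cases "even n")
  case True
  then obtain m where "n = 2 * m" by blast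
  then show ?thesis unfolding h_def by (simp add: algebra_simps)
next
  case False
  then obtain m where "n = 2 * m + 1" using oddE by blast
  then show ?thesis unfolding h_def by (simp add: algebra_simps)
qed

theorem theorem2p4:
  fixes A :: "int set" and n :: nat
  assumes "finite A" and "card A = n" and "n \<ge> 1"
  shows "\<forall>x::int.
    pmf (map_pmf (\<lambda>((y1, y2), y3). y1 + y2 + y3)
           (pair_pmf (pair_pmf (pmf_of_set A) (pmf_of_set A)) (pmf_of_set A))) x
      \<le> (3 + 1 / (real n)^2) / (4 * real n)"
proof
  fix x :: int
  let ?N = "card {(a, b) \<in> A \<times> A. a + b \<in> (\<lambda>c. x - c) ` A}"
  have "card ((\<lambda>c. x - c) ` A) = n"
    using assms(2) by (simp add: card_image inj_on_def)
  then have "4 * ?N \<le> 3 * n * n + 1"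
    using card_pairs_sum_in_le[OF assms(1), of "(\<lambda>c. x - c) ` A" "(n + 1) div 2"]
      four_mul_balanced_split_le[of n] assms(1,2) by simp
  then have "real (4 * ?N) \<le> real (3 * n * n + 1)"
    by (rule of_nat_mono)
  moreover have "A \<noteq> {}" "real n > 0"
    using assms by auto
  ultimately show "pmf (map_pmf (\<lambda>((y1, y2), y3). y1 + y2 + y3)
           (pair_pmf (pair_pmf (pmf_of_set A) (pmf_of_set A)) (pmf_of_set A))) x
      \<le> (3 + 1 / (real n)^2) / (4 * real n)"
    unfolding pmf_sum3_pmf_of_set[OF assms(1) \<open>A \<noteq> {}\<close>] assms(2)
    by (simp add: field_simps power2_eq_square power3_eq_cube)
qed

end
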